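(* Let $N\ge2$. Then there exist a unital complex algebra $A$ and $F\in\mathcal G_N^{dif}(A)$ such that if $G,H\in\mathcal G_N^{dif}(A)$ satisfy $(G\circ F)^j(z)=z_j$ and $(F\circ H)^j(z)=z_j$ for all $j$, then $G\neq H$; that is, the left and right substitutional inverses of a power series are in general distinct.
   Context: Let $A$ be a unital complex algebra and $z_1,\dots,z_N$ non-commuting variables commuting with elements of $A$; for a word $w=w(1)\cdots w(p)$ over $\{1,\dots,N\}$ put $z_w=z_{w(1)}\cdots z_{w(p)}$. $\mathcal G_N^{dif}(A)$ is the set of $N$-tuples $F=(F^1,\dots,F^N)$ of formal power series $F^j(z)=z_j+\sum_{|u|\ge2}f_u^jz_u$, $f_u^j\in A$; put $f_k^j=\delta_{jk}$. Substitution: $(F\circ G)^i(z)=\sum_w f_w^i\,G^{w(1)}(z)\cdots G^{w(q)}(z)$, the sum over nonempty words $w$ with $q=|w|$. *)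

theory Defs
  imports Complex_Main "HOL-Algebra.Ring"
begin

definition complex_algebra :: "('a, 'b) ring_scheme \<Rightarrow> (complex \<Rightarrow> 'a \<Rightarrow> 'a) \<Rightarrow> bool" where
  "complex_algebra A sm \<longleftrightarrow> ring A \<and>
     (\<forall>c. \<forall>x\<in>carrier A. sm c x \<in> carrier A) \<and>
     (\<forall>c. \<forall>x\<in>carrier A. \<forall>y\<in>carrier A. sm c (x \<oplus>\<^bsub>A\<^esub> y) = sm c x \<oplus>\<^bsub>A\<^esub> sm c y) \<and>
     (\<forall>c d. \<forall>x\<in>carrier A. sm (c + d) x = sm c x \<oplus>\<^bsub>A\<^esub> sm d x) \<and>
     (\<forall>c d. \<forall>x\<in>carrier A. sm (c * d) x = sm c (sm d x)) \<and>
     (\<forall>x\<in>carrier A. sm 1 x = x) \<and>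
     (\<forall>c. \<forall>x\<in>carrier A. \<forall>y\<in>carrier A.
        sm c (x \<otimes>\<^bsub>A\<^esub> y) = sm c x \<otimes>\<^bsub>A\<^esub> y \<and> sm c (x \<otimes>\<^bsub>A\<^esub> y) = x \<otimes>\<^bsub>A\<^esub> sm c y)"

definition words :: "nat \<Rightarrow> nat list set" where
  "words N = {w. set w \<subseteq> {1..N}}"

text \<open>An N-tuple of noncommutative power series with coefficients in A is
  represented by F :: nat => nat list => 'a, where F j u is the coefficient f_u^j
  of z_u in F^j. Membership in G_N^dif(A): coefficients in A, no constant term,
  linear part z_j (f_k^j = delta_jk); values outside the index range are fixed
  to zero so that equality of tuples is equality of functions.\<close>
definition Gdif :: "('a, 'b) ring_scheme \<Rightarrow> nat \<Rightarrow> (nat \<Rightarrow> nat list \<Rightarrow> 'a) set" where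
  "Gdif A N = {F.
     (\<forall>j u. F j u \<in> carrier A) \<and>
     (\<forall>j u. (j \<notin> {1..N} \<or> u \<notin> words N) \<longrightarrow> F j u = \<zero>\<^bsub>A\<^esub>) \<and>
     (\<forall>j\<in>{1..N}. F j [] = \<zero>\<^bsub>A\<^esub>) \<and>
     (\<forall>j\<in>{1..N}. \<forall>k\<in>{1..N}. F j [k] = (if j = k then \<one>\<^bsub>A\<^esub> else \<zero>\<^bsub>A\<^esub>))}"

text \<open>Product of two noncommutative series (z's commute with A):
  coefficient of z_v in P Q is sum over v = v1 v2 of p_{v1} q_{v2}.\<close>
definition ser_mult :: "('a, 'b) ring_scheme \<Rightarrow> (nat list \<Rightarrow> 'a) \<Rightarrow> (nat list \<Rightarrow> 'a) \<Rightarrow> nat list \<Rightarrow> 'a" where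
  "ser_mult A P Q v = (\<Oplus>\<^bsub>A\<^esub> k\<in>{0..length v}. P (take k v) \<otimes>\<^bsub>A\<^esub> Q (drop k v))"

definition ser_one :: "('a, 'b) ring_scheme \<Rightarrow> nat list \<Rightarrow> 'a" where
  "ser_one A v = (if v = [] then \<one>\<^bsub>A\<^esub> else \<zero>\<^bsub>A\<^esub>)"

definition ser_prod :: "('a, 'b) ring_scheme \<Rightarrow> (nat \<Rightarrow> nat list \<Rightarrow> 'a) \<Rightarrow> nat list \<Rightarrow> nat list \<Rightarrow> 'a" where
  "ser_prod A G w = foldr (\<lambda>k S. ser_mult A (G k) S) w (ser_one A)"

text \<open>Coefficientwise, only words with |w| <= |v| contribute to the coefficient of z_v
  (each G^k has no constant term), so the coefficient is a finite sum.\<close>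
definition subst :: "('a, 'b) ring_scheme \<Rightarrow> nat \<Rightarrow> (nat \<Rightarrow> nat list \<Rightarrow> 'a) \<Rightarrow> (nat \<Rightarrow> nat list \<Rightarrow> 'a) \<Rightarrow> nat \<Rightarrow> nat list \<Rightarrow> 'a" where
  "subst A N F G i v = (\<Oplus>\<^bsub>A\<^esub> w\<in>{w \<in> words N. 1 \<le> length w \<and> length w \<le> length v}.
      F i w \<otimes>\<^bsub>A\<^esub> ser_prod A G w v)"

definition is_ident :: "('a, 'b) ring_scheme \<Rightarrow> nat \<Rightarrow> (nat \<Rightarrow> nat list \<Rightarrow> 'a) \<Rightarrow> bool" where
  "is_ident A N K \<longleftrightarrow> (\<forall>j\<in>{1..N}. \<forall>v\<in>words N. K j v = (if v = [j] then \<one>\<^bsub>A\<^esub> else \<zero>\<^bsub>A\<^esub>))"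

end

theory Submission
  imports Defs "HOL-Library.Function_Algebras"
begin

(* Take for A the algebra of upper triangular complex 2 x 2 matrices and
   F = (z1 + b z1 z2, z2 + e z1 z1, z3, ..., zN) with the matrix units b = E11 and e = E12,
   so that b e = e but e b = 0.  The equations F o H = id determine the coefficients of H
   recursively by degree; up to degree 4 they give
     H^1 = z1 - b z1 z2 + e z1 z1 z1 + b z1 z2 z2 - e z1 z2 z1 z1 + ... .
   On the other hand, writing h_w for the coefficients of H^1, the coefficient of
   z1 z2 z1 z1 in (H o F)^1 is
     h_1211 + h_122 e + h_111 b + h_12 b e = -e + b e + e b - b e = -e,
   which is not 0, so H is not also a left inverse of F. *)

lemma const_zero_eq_zero [simp]: "(\<lambda>_. 0) = (0 :: 'a \<Rightarrow> 'b::zero)"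
  by (simp add: zero_fun_def)

definition ut_carrier :: "(nat list \<Rightarrow> complex) set" where
  "ut_carrier = {f. \<forall>u. u \<notin> {[0], [1], [2]} \<longrightarrow> f u = 0}"

(* f [0], f [1], f [2] are the entries a, b, c of the matrix [[a, b], [0, c]]. *)
definition ut_mult :: "(nat list \<Rightarrow> complex) \<Rightarrow> (nat list \<Rightarrow> complex) \<Rightarrow> nat list \<Rightarrow> complex" where
  "ut_mult f g = (\<lambda>u. if u = [0] then f [0] * g [0]
     else if u = [1] then f [0] * g [1] + f [1] * g [2]
     else if u = [2] then f [2] * g [2] else 0)"

definition ut_one :: "nat list \<Rightarrow> complex" where
  "ut_one = (\<lambda>u. if u = [0] \<or> u = [2] then 1 else 0)"

definition e11 :: "nat list \<Rightarrow> complex" where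
  "e11 = (\<lambda>u. if u = [0] then 1 else 0)"

definition e12 :: "nat list \<Rightarrow> complex" where
  "e12 = (\<lambda>u. if u = [1] then 1 else 0)"

definition UT :: "(nat list \<Rightarrow> complex) ring" where
  "UT = \<lparr>carrier = ut_carrier, mult = ut_mult, one = ut_one, zero = 0, add = (+)\<rparr>"

definition ut_scale :: "complex \<Rightarrow> (nat list \<Rightarrow> complex) \<Rightarrow> nat list \<Rightarrow> complex" where
  "ut_scale c f = (\<lambda>u. c * f u)"

lemma carrier_UT [simp]: "carrier UT = ut_carrier"
  by (simp add: UT_def)

lemma ut_mult_closed [simp]: "ut_mult f g \<in> ut_carrier"
  by (simp add: ut_carrier_def ut_mult_def)

lemma ut_constants_in_carrier [simp]: "ut_one \<in> ut_carrier" "e11 \<in> ut_carrier" "e12 \<in> ut_carrier" "0 \<in> ut_carrier"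
  by (auto simp: ut_carrier_def ut_one_def e11_def e12_def)

lemma ut_mult_zero [simp]: "ut_mult f 0 = 0" "ut_mult 0 f = 0"
  by (auto simp: ut_mult_def fun_eq_iff)

lemma ut_mult_one [simp]: "f \<in> ut_carrier \<Longrightarrow> ut_mult f ut_one = f" "f \<in> ut_carrier \<Longrightarrow> ut_mult ut_one f = f"
  by (auto simp: ut_mult_def fun_eq_iff ut_one_def ut_carrier_def)

lemma ring_UT: "ring UT"
proof (rule ringI)
  show "abelian_group UT"
  proof (rule abelian_groupI)
    fix x assume "x \<in> carrier UT"
    then show "\<exists>y\<in>carrier UT. y \<oplus>\<^bsub>UT\<^esub> x = \<zero>\<^bsub>UT\<^esub>"
      by (intro bexI[of _ "- x"]) (auto simp: UT_def ut_carrier_def)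
  qed (auto simp: UT_def ut_carrier_def algebra_simps)
  show "monoid UT"
    by (rule monoidI) (auto simp: UT_def ut_mult_def ut_one_def ut_carrier_def fun_eq_iff algebra_simps)
qed (auto simp: UT_def ut_mult_def fun_eq_iff algebra_simps)

lemma complex_algebra_UT: "complex_algebra UT ut_scale"
  unfolding complex_algebra_def using ring_UT
  by (auto simp: UT_def ut_scale_def ut_carrier_def ut_mult_def fun_eq_iff algebra_simps)

lemma finsum_UT:
  "finite S \<Longrightarrow> (\<And>x. x \<in> S \<Longrightarrow> f x \<in> ut_carrier) \<Longrightarrow> finsum UT f S = (\<lambda>u. \<Sum>x\<in>S. f x u)"
proof (induction S rule: finite_induct)
  case empty
  interpret ring UT by (rule ring_UT)
  show ?case using finsum_empty by (simp add: UT_def fun_eq_iff)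
next
  case (insert a S)
  interpret ring UT by (rule ring_UT)
  have "finsum UT f (insert a S) = f a \<oplus>\<^bsub>UT\<^esub> finsum UT f S"
    using insert by (intro finsum_insert) (auto simp: UT_def)
  then show ?case using insert by (simp add: UT_def fun_eq_iff)
qed

lemma ser_mult_UT:
  "ser_mult UT P Q v = (\<lambda>u. \<Sum>k=0..length v. ut_mult (P (take k v)) (Q (drop k v)) u)"
  unfolding ser_mult_def by (subst finsum_UT) (auto simp: UT_def)

lemma ser_one_UT: "ser_one UT v = (if v = [] then ut_one else 0)"
  by (simp add: ser_one_def UT_def)

lemma ser_prod_Nil: "ser_prod A G [] = ser_one A"
  by (simp add: ser_prod_def)

lemma ser_prod_Cons: "ser_prod A G (k # w) = ser_mult A (G k) (ser_prod A G w)"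
  by (simp add: ser_prod_def)

lemma ser_mult_one_right:
  assumes "ring A" and "\<And>u. P u \<in> carrier A"
  shows "ser_mult A P (ser_one A) v = P v"
proof -
  interpret ring A by fact
  have "ser_mult A P (ser_one A) v
      = (\<Oplus>\<^bsub>A\<^esub>k\<in>{length v}. P (take k v) \<otimes>\<^bsub>A\<^esub> ser_one A (drop k v))"
    unfolding ser_mult_def using assms(2)
    by (intro add.finprod_mono_neutral_cong_right) (auto simp: ser_one_def)
  then show ?thesis using assms(2) by (simp add: ser_one_def)
qed

lemma ser_prod_singleton:
  assumes "ring A" and "\<And>u. G k u \<in> carrier A"
  shows "ser_prod A G [k] = G k"
  using ser_mult_one_right[OF assms] by (simp add: ser_prod_Cons ser_prod_Nil fun_eq_iff)

lemma ser_prod_pair: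
  assumes "ring A" and "\<And>u. G c u \<in> carrier A"
  shows "ser_prod A G [a, c] = ser_mult A (G a) (G c)"
  using ser_prod_singleton[of A G c, OF assms] by (simp add: ser_prod_Cons)

lemma finite_subst_index: "finite {w \<in> words N. 1 \<le> length w \<and> length w \<le> n}"
  by (rule finite_subset[OF _ finite_lists_length_le[of "{1..N}" n]]) (auto simp: words_def)

lemma subst_UT_eq_sum:
  assumes "T \<subseteq> {w \<in> words N. 1 \<le> length w \<and> length w \<le> length v}"
    and "\<And>w. w \<in> words N \<Longrightarrow> 1 \<le> length w \<Longrightarrow> length w \<le> length v \<Longrightarrow> w \<notin> T \<Longrightarrow>
           ut_mult (F i w) (ser_prod UT G w v) = 0"
  shows "subst UT N F G i v u = (\<Sum>w\<in>T. ut_mult (F i w) (ser_prod UT G w v) u)"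
proof -
  have "subst UT N F G i v u = (\<Sum>w | w \<in> words N \<and> 1 \<le> length w \<and> length w \<le> length v.
      ut_mult (F i w) (ser_prod UT G w v) u)"
    unfolding subst_def by (subst finsum_UT) (auto simp: UT_def finite_subst_index[unfolded One_nat_def])
  also have "\<dots> = (\<Sum>w\<in>T. ut_mult (F i w) (ser_prod UT G w v) u)"
    using assms by (intro sum.mono_neutral_right finite_subst_index) (auto simp: fun_eq_iff)
  finally show ?thesis .
qed

definition F_ex :: "nat \<Rightarrow> nat \<Rightarrow> nat list \<Rightarrow> nat list \<Rightarrow> complex" where
  "F_ex N j u = (if j \<in> {1..N} \<and> u = [j] then ut_one
     else if j = 1 \<and> u = [1, 2] then e11
     else if j = 2 \<and> u = [1, 1] then e12 else 0)"

lemma F_ex_carrier [simp]: "F_ex N j u \<in> ut_carrier"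
  by (simp add: F_ex_def)

lemma F_ex_Gdif: "2 \<le> N \<Longrightarrow> F_ex N \<in> Gdif UT N"
  unfolding Gdif_def by (auto simp: F_ex_def UT_def words_def)

lemma ser_prod_F_ex_Nil: "ser_prod UT (F_ex N) w [] = (if w = [] then ut_one else 0)"
  by (cases w) (simp_all add: ser_prod_Nil ser_prod_Cons ser_one_UT ser_mult_UT F_ex_def)

lemma ser_prod_F_ex_1:
  assumes "2 \<le> N"
  shows "ser_prod UT (F_ex N) w [1] = (if w = [1] then ut_one else 0)"
proof (cases w)
  case Nil then show ?thesis by (simp add: ser_prod_Nil ser_one_UT)
next
  case (Cons k w')
  then show ?thesis using assms by (simp add: ser_prod_Cons ser_mult_UT ser_prod_F_ex_Nil F_ex_def)
qed

lemma ser_prod_F_ex_11: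
  assumes "2 \<le> N"
  shows "ser_prod UT (F_ex N) w [1, 1] = (if w = [1, 1] then ut_one else if w = [2] then e12 else 0)"
proof (cases w)
  case Nil then show ?thesis by (simp add: ser_prod_Nil ser_one_UT)
next
  case (Cons k w')
  then show ?thesis using assms
    by (simp add: ser_prod_Cons ser_mult_UT ser_prod_F_ex_Nil ser_prod_F_ex_1[unfolded One_nat_def]
        F_ex_def sum.atLeast0_atMost_Suc)
qed

lemma ser_prod_F_ex_211:
  assumes "2 \<le> N"
  shows "ser_prod UT (F_ex N) w [2, 1, 1] = (if w = [2, 1, 1] then ut_one else if w = [2, 2] then e12 else 0)"
proof (cases w)
  case Nil then show ?thesis by (simp add: ser_prod_Nil ser_one_UT)
next
  case (Cons k w')
  then show ?thesis using assms
    by (simp add: ser_prod_Cons ser_mult_UT ser_prod_F_ex_Nil ser_prod_F_ex_11[unfolded One_nat_def]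
        F_ex_def sum.atLeast0_atMost_Suc)
qed

lemma ser_prod_F_ex_1211:
  assumes "2 \<le> N"
  shows "ser_prod UT (F_ex N) w [1, 2, 1, 1] =
    (if w = [1, 2, 1, 1] then ut_one else if w = [1, 2, 2] then e12 else if w = [1, 1, 1] then e11
     else if w = [1, 2] then ut_mult e11 e12 else 0)"
proof (cases w)
  case Nil then show ?thesis by (simp add: ser_prod_Nil ser_one_UT)
next
  case (Cons k w')
  then show ?thesis using assms
    by (simp add: ser_prod_Cons ser_mult_UT ser_prod_F_ex_Nil ser_prod_F_ex_11[unfolded One_nat_def]
        ser_prod_F_ex_211[unfolded One_nat_def] F_ex_def sum.atLeast0_atMost_Suc)
qed

lemma Gdif_UT_carrier: "H \<in> Gdif UT N \<Longrightarrow> H j u \<in> ut_carrier"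
  by (simp add: Gdif_def UT_def)

lemma subst_F_ex_1:
  assumes "2 \<le> N" and H: "H \<in> Gdif UT N" and "v \<in> words N" and "2 \<le> length v"
  shows "subst UT N (F_ex N) H 1 v = H 1 v + ut_mult e11 (ser_mult UT (H 1) (H 2) v)"
proof -
  have "subst UT N (F_ex N) H 1 v u = (\<Sum>w\<in>{[1], [1, 2]}. ut_mult (F_ex N 1 w) (ser_prod UT H w v) u)" for u
    using assms by (intro subst_UT_eq_sum) (auto simp: words_def F_ex_def)
  then show ?thesis
    using assms Gdif_UT_carrier[OF H]
    by (simp add: fun_eq_iff F_ex_def ser_prod_singleton[OF ring_UT] ser_prod_pair[OF ring_UT])
qed

lemma subst_F_ex_2:
  assumes "2 \<le> N" and H: "H \<in> Gdif UT N" and "v \<in> words N" and "2 \<le> length v"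
  shows "subst UT N (F_ex N) H 2 v = H 2 v + ut_mult e12 (ser_mult UT (H 1) (H 1) v)"
proof -
  have "subst UT N (F_ex N) H 2 v u = (\<Sum>w\<in>{[2], [1, 1]}. ut_mult (F_ex N 2 w) (ser_prod UT H w v) u)" for u
    using assms by (intro subst_UT_eq_sum) (auto simp: words_def F_ex_def)
  then show ?thesis
    using assms Gdif_UT_carrier[OF H]
    by (simp add: fun_eq_iff F_ex_def ser_prod_singleton[OF ring_UT] ser_prod_pair[OF ring_UT])
qed

lemma right_inverse_recursion:
  assumes "2 \<le> N" and "H \<in> Gdif UT N" and right: "is_ident UT N (subst UT N (F_ex N) H)"
    and "v \<in> words N" and "2 \<le> length v"
  shows "H 1 v = - ut_mult e11 (ser_mult UT (H 1) (H 2) v)"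
    and "H 2 v = - ut_mult e12 (ser_mult UT (H 1) (H 1) v)"
proof -
  have "subst UT N (F_ex N) H 1 v = 0" and "subst UT N (F_ex N) H 2 v = 0"
    using right assms unfolding is_ident_def by (auto simp: UT_def)
  then show "H 1 v = - ut_mult e11 (ser_mult UT (H 1) (H 2) v)"
    and "H 2 v = - ut_mult e12 (ser_mult UT (H 1) (H 1) v)"
    unfolding subst_F_ex_1[OF assms(1,2,4,5)] subst_F_ex_2[OF assms(1,2,4,5)]
    by (simp_all add: eq_neg_iff_add_eq_0)
qed

lemma right_inverse_coeffs:
  assumes N: "2 \<le> N" and H: "H \<in> Gdif UT N" and right: "is_ident UT N (subst UT N (F_ex N) H)"
  shows "H 1 [1, 2] = - e11" and "H 1 [1, 1, 1] = e12" and "H 1 [1, 2, 2] = e11"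
    and "H 1 [1, 2, 1, 1] = - e12"
proof -
  have "v \<in> words N" if "set v \<subseteq> {1, 2}" for v
    using N that by (auto simp: words_def)
  note rec = right_inverse_recursion[OF N H right this]
  have H_Nil: "H j [] = 0" for j
    using H by (auto simp: Gdif_def UT_def words_def)
  have H_lin: "H 1 [1] = ut_one" "H 2 [2] = ut_one" "H 1 [2] = 0" "H 2 [1] = 0"
    using H N by (auto simp: Gdif_def UT_def)
  note entries = fun_eq_iff ut_mult_def e11_def e12_def ut_one_def
  note expand = ser_mult_UT sum.atLeast0_atMost_Suc entries
  have "ser_mult UT (H 1) (H 2) [1, 2] = ut_one"
    using H_Nil H_lin by (simp add: expand)
  then show h1_12: "H 1 [1, 2] = - e11"
    using rec(1)[of "[1, 2]"] by simp
  have "ser_mult UT (H 1) (H 2) [2, 1] = 0"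
    using H_Nil H_lin by (simp add: expand)
  then have h1_21: "H 1 [2, 1] = 0"
    using rec(1)[of "[2, 1]"] by simp
  have "ser_mult UT (H 1) (H 1) [1, 1] = ut_one"
    using H_Nil H_lin by (simp add: expand)
  then have h2_11: "H 2 [1, 1] = - e12"
    using rec(2)[of "[1, 1]"] by simp
  have "ser_mult UT (H 1) (H 1) [2, 2] = 0"
    using H_Nil H_lin by (simp add: expand)
  then have h2_22: "H 2 [2, 2] = 0"
    using rec(2)[of "[2, 2]"] by simp
  have "ser_mult UT (H 1) (H 2) [1, 1, 1] = - e12"
    using H_Nil H_lin h2_11 by (simp add: expand)
  then show "H 1 [1, 1, 1] = e12"
    using rec(1)[of "[1, 1, 1]"] by (simp add: entries)
  have "ser_mult UT (H 1) (H 2) [1, 2, 2] = - e11"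
    using H_Nil H_lin h1_12 h2_22 by (simp add: expand)
  then show "H 1 [1, 2, 2] = e11"
    using rec(1)[of "[1, 2, 2]"] by (simp add: entries)
  have "ser_mult UT (H 1) (H 1) [2, 1, 1] = 0"
    using H_Nil H_lin h1_21 by (simp add: expand)
  then have h2_211: "H 2 [2, 1, 1] = 0"
    using rec(2)[of "[2, 1, 1]"] by simp
  have "ser_mult UT (H 1) (H 2) [1, 2, 1, 1] = ut_mult e11 e12"
    using H_Nil H_lin h1_12 h2_11 h2_211 by (simp add: expand)
  then show "H 1 [1, 2, 1, 1] = - e12"
    using rec(1)[of "[1, 2, 1, 1]"] by (simp add: entries)
qed

lemma left_inverse_coeff_1211:
  assumes N: "2 \<le> N" and G: "G \<in> Gdif UT N" and left: "is_ident UT N (subst UT N G (F_ex N))"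
  shows "G 1 [1, 2, 1, 1] + ut_mult (G 1 [1, 2, 2]) e12 + ut_mult (G 1 [1, 1, 1]) e11
           + ut_mult (G 1 [1, 2]) (ut_mult e11 e12) = 0"
proof -
  let ?v = "[1, 2, 1, 1] :: nat list"
  have "subst UT N G (F_ex N) 1 ?v = 0"
    using left N unfolding is_ident_def by (auto simp: UT_def words_def)
  moreover have "subst UT N G (F_ex N) 1 ?v u =
      (\<Sum>w\<in>{[1, 2, 1, 1], [1, 2, 2], [1, 1, 1], [1, 2]}. ut_mult (G 1 w) (ser_prod UT (F_ex N) w ?v) u)"
    for u using N by (intro subst_UT_eq_sum) (auto simp: words_def ser_prod_F_ex_1211[OF N, unfolded One_nat_def])
  ultimately show ?thesis
    using Gdif_UT_carrier[OF G]
    by (simp add: fun_eq_iff ser_prod_F_ex_1211[OF N, unfolded One_nat_def] add.assoc)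
qed

theorem corollary5:
  fixes N :: nat
  assumes "2 \<le> N"
  shows "\<exists>(A :: (nat list \<Rightarrow> complex) ring) sm F.
           complex_algebra A sm \<and> F \<in> Gdif A N \<and>
           (\<forall>G\<in>Gdif A N. \<forall>H\<in>Gdif A N.
              is_ident A N (subst A N G F) \<and> is_ident A N (subst A N F H) \<longrightarrow> G \<noteq> H)"
proof (intro exI conjI ballI impI)
  show "complex_algebra UT ut_scale"
    by (rule complex_algebra_UT)
  show "F_ex N \<in> Gdif UT N"
    using assms by (rule F_ex_Gdif)
  fix G H
  assume G: "G \<in> Gdif UT N" and "H \<in> Gdif UT N"
    and "is_ident UT N (subst UT N G (F_ex N)) \<and> is_ident UT N (subst UT N (F_ex N) H)"
  then have left: "is_ident UT N (subst UT N G (F_ex N))"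
    and H: "H 1 [1, 2] = - e11" "H 1 [1, 1, 1] = e12" "H 1 [1, 2, 2] = e11" "H 1 [1, 2, 1, 1] = - e12"
    using right_inverse_coeffs[OF assms] by blast+
  show "G \<noteq> H"
  proof
    assume "G = H"
    with left_inverse_coeff_1211[OF assms G left] H
    have "- e12 + ut_mult e11 e12 + ut_mult e12 e11 + ut_mult (- e11) (ut_mult e11 e12) = 0"
      by simp
    then show False
      by (auto simp: fun_eq_iff ut_mult_def e11_def e12_def dest: spec[of _ "[1]"])
  qed
qed

end
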